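(* If $f\in \mathcal{S}^*_{nc}$, then $$ 0 \leq \det T_{2,1}(f) \leq 1 \quad \text{and} \quad \det T_{3,1}(f) \leq 1.$$ All the estimates are sharp.
   Context: Let $\mathcal{A}$ be the class of analytic functions $f(z)=z+\sum_{n=2}^\infty a_n z^n$ in the unit disk $\mathbb{D}=\{z\in\mathbb{C}:|z|<1\}$. The class $\mathcal{S}^*_{nc}$ consists of all $f\in\mathcal{A}$ such that $\frac{zf'(z)}{f(z)} \prec \frac{1+z}{\cos z}$ in $\mathbb{D}$, where $\prec$ denotes subordination. For $f\in\mathcal{A}$, the Hermitian-Toeplitz determinants are $\det T_{2,1}(f) = 1-|a_2|^2$ and $\det T_{3,1}(f) = 1 - 2|a_2|^2 + 2\,\mathrm{Re}\left(a_2^2\, \overline{a_3}\right) - |a_3|^2$. *)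

theory Defs
  imports "HOL-Analysis.Analysis"
begin

definition subordinate :: "(complex \<Rightarrow> complex) \<Rightarrow> (complex \<Rightarrow> complex) \<Rightarrow> bool" where
  "subordinate g F \<longleftrightarrow>
     (\<exists>w. w holomorphic_on ball 0 1 \<and> w 0 = 0 \<and> (\<forall>z\<in>ball 0 1. norm (w z) < 1) \<and>
          (\<forall>z\<in>ball 0 1. g z = F (w z)))"

definition taylor_coeff :: "(complex \<Rightarrow> complex) \<Rightarrow> nat \<Rightarrow> complex" where
  "taylor_coeff f n = (deriv ^^ n) f 0 / fact n"

definition classA :: "(complex \<Rightarrow> complex) set" where
  "classA = {f. f holomorphic_on ball 0 1 \<and> f 0 = 0 \<and> deriv f 0 = 1}"

text \<open>The class S*_nc: z f'(z)/f(z) (with value 1 at 0) subordinate to (1+z)/cos z.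
  f is required to be non-vanishing on the punctured disk so that z f'/f is analytic.\<close>
definition S_nc :: "(complex \<Rightarrow> complex) set" where
  "S_nc = {f. f \<in> classA \<and> (\<forall>z\<in>ball 0 1. z \<noteq> 0 \<longrightarrow> f z \<noteq> 0) \<and>
              subordinate (\<lambda>z. if z = 0 then 1 else z * deriv f z / f z) (\<lambda>z. (1 + z) / cos z)}"

definition detT21 :: "(complex \<Rightarrow> complex) \<Rightarrow> real" where
  "detT21 f = 1 - (norm (taylor_coeff f 2))\<^sup>2"

definition detT31 :: "(complex \<Rightarrow> complex) \<Rightarrow> real" where
  "detT31 f = 1 - 2 * (norm (taylor_coeff f 2))\<^sup>2
     + 2 * Re ((taylor_coeff f 2)\<^sup>2 * cnj (taylor_coeff f 3)) - (norm (taylor_coeff f 3))\<^sup>2"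

end

theory Submission
  imports Defs "HOL-Complex_Analysis.Complex_Analysis"
begin

text \<open>Write \<open>F z = (1 + z) / cos z\<close> and \<open>p = F \<circ> w\<close> with a Schwarz function \<open>w\<close>, so that
  \<open>p f = z f'\<close>. Comparing second derivatives at 0 gives \<open>a\<^sub>2 = p'(0) = F'(0) w'(0) = w'(0)\<close>,
  hence \<open>|a\<^sub>2| \<le> 1\<close> by the Schwarz lemma. This bounds \<open>det T\<^sub>2\<^sub>,\<^sub>1 = 1 - |a\<^sub>2|\<^sup>2\<close>, and
  \<open>det T\<^sub>3\<^sub>,\<^sub>1 = (1 - |a\<^sub>2|\<^sup>2)\<^sup>2 - |a\<^sub>3 - a\<^sub>2\<^sup>2|\<^sup>2 \<le> 1\<close>. The identity map (\<open>a\<^sub>2 = a\<^sub>3 = 0\<close>) and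
  the function with \<open>z f'/f = F\<close> (\<open>a\<^sub>2 = F'(0) = 1\<close>) show sharpness.\<close>

lemma cos_nonzero_if_norm_less_pi_half:
  fixes z :: complex
  assumes "norm z < pi / 2"
  shows "cos z \<noteq> 0"
proof
  assume "cos z = 0"
  then obtain n :: int where "z = complex_of_real ((real_of_int n + 1/2) * pi)"
    by (auto simp: cos_eq_0 algebra_simps)
  then have "norm z = \<bar>real_of_int n + 1/2\<bar> * pi"
    by (simp only: norm_of_real abs_mult) simp
  moreover have "\<bar>real_of_int n + 1/2\<bar> \<ge> 1/2"
    by (cases "n \<ge> 0") auto
  ultimately have "norm z \<ge> 1/2 * pi"
    by (simp add: mult_right_mono)
  with assms show False by simp
qed

lemma holomorphic_on_one_plus_div_cos: "(\<lambda>z. (1 + z) / cos z) holomorphic_on ball 0 1"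
proof -
  have "cos z \<noteq> 0" if "z \<in> ball 0 1" for z :: complex
    using that pi_gt3 by (intro cos_nonzero_if_norm_less_pi_half) auto
  then show ?thesis by (intro holomorphic_intros) auto
qed

lemma one_plus_div_cos_has_derivative_0:
  "((\<lambda>z::complex. (1 + z) / cos z) has_field_derivative 1) (at 0)"
proof -
  have "((\<lambda>z::complex. (1 + z) / cos z) has_field_derivative
          ((0 + 1) * cos 0 - (1 + 0) * (- sin 0)) / (cos 0 * cos 0)) (at 0)"
    by (intro derivative_eq_intros) auto
  then show ?thesis by simp
qed

text \<open>Leibniz rule on both sides of \<open>p f = z f'\<close>: order 1 at 0 forces \<open>p(0) = 1\<close>, and then
  order 2 gives the claim.\<close>
lemma higher_deriv_2_eq_if_mult_eq_z_deriv:
  assumes f: "f holomorphic_on S" and p: "p holomorphic_on S" and S: "open S" "0 \<in> S"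
    and f0: "f 0 = 0" and df0: "deriv f 0 = 1"
    and eq: "\<And>z. z \<in> S \<Longrightarrow> p z * f z = z * deriv f z"
  shows "(deriv ^^ 2) f 0 = 2 * deriv p 0"
proof -
  have df: "deriv f holomorphic_on S"
    using f S(1) by (rule holomorphic_deriv)
  have id: "(\<lambda>z. z) holomorphic_on S"
    by simp
  have "(deriv ^^ n) (\<lambda>z. p z * f z) 0 = (deriv ^^ n) (\<lambda>z. z * deriv f z) 0" for n
    using S eq f p df by (intro higher_deriv_transform_within_open holomorphic_intros) auto
  from this[of 1] this[of 2] show ?thesis
    unfolding higher_deriv_mult[OF p f S] higher_deriv_mult[OF id df S]
    by (simp add: numeral_2_eq_2 f0 df0)
qed

lemma S_nc_obtains_Schwarz_function:
  assumes "f \<in> S_nc"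
  obtains w where "w holomorphic_on ball 0 1" "w 0 = 0" "\<And>z. norm z < 1 \<Longrightarrow> norm (w z) < 1"
    and "\<And>z. z \<in> ball 0 1 \<Longrightarrow> (1 + w z) / cos (w z) * f z = z * deriv f z"
proof -
  obtain w where w: "w holomorphic_on ball 0 1" "w 0 = 0" "\<forall>z\<in>ball 0 1. norm (w z) < 1"
    and sub: "\<forall>z\<in>ball 0 1. (if z = 0 then 1 else z * deriv f z / f z) = (1 + w z) / cos (w z)"
    using assms by (auto simp: S_nc_def subordinate_def)
  have "(1 + w z) / cos (w z) * f z = z * deriv f z" if "z \<in> ball 0 1" for z
  proof (cases "z = 0")
    case True
    then show ?thesis using assms by (simp add: S_nc_def classA_def)
  next
    case False
    then have "f z \<noteq> 0" using assms that by (auto simp: S_nc_def)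
    moreover have "z * deriv f z / f z = (1 + w z) / cos (w z)"
      using sub[rule_format, OF that] False by simp
    ultimately show ?thesis by (simp add: field_simps)
  qed
  with w show thesis by (intro that[of w]) auto
qed

lemma norm_taylor_coeff_2_le_1_if_S_nc:
  assumes "f \<in> S_nc"
  shows "norm (taylor_coeff f 2) \<le> 1"
proof -
  obtain w where w: "w holomorphic_on ball 0 1" "w 0 = 0" "\<And>z. norm z < 1 \<Longrightarrow> norm (w z) < 1"
    and eq: "\<And>z. z \<in> ball 0 1 \<Longrightarrow> (1 + w z) / cos (w z) * f z = z * deriv f z"
    using S_nc_obtains_Schwarz_function[OF assms] by blast
  define p where "p = (\<lambda>z. (1 + w z) / cos (w z))"
  have f: "f holomorphic_on ball 0 1" "f 0 = 0" "deriv f 0 = 1"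
    using assms by (auto simp: S_nc_def classA_def)
  have "w ` ball 0 1 \<subseteq> ball 0 1"
    using w(3) by auto
  then have p: "p holomorphic_on ball 0 1"
    unfolding p_def using holomorphic_on_compose_gen[OF w(1) holomorphic_on_one_plus_div_cos]
    by (simp add: o_def)
  have "(p has_field_derivative 1 * deriv w 0) (at 0)"
    unfolding p_def using w one_plus_div_cos_has_derivative_0
    by (intro DERIV_chain2[where f = "\<lambda>z. (1 + z) / cos z"] holomorphic_derivI[of _ "ball 0 1"]) auto
  then have "deriv p 0 = deriv w 0"
    by (simp add: DERIV_imp_deriv)
  moreover have "(deriv ^^ 2) f 0 = 2 * deriv p 0"
    using f p eq by (intro higher_deriv_2_eq_if_mult_eq_z_deriv) (auto simp: p_def)
  ultimately have "taylor_coeff f 2 = deriv w 0"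
    by (simp add: taylor_coeff_def)
  with Schwarz_Lemma(2)[OF w, of 0] show ?thesis by simp
qed

text \<open>The solution is \<open>f z = z exp (\<integral>\<^sub>0\<^sup>z (p t - 1) / t dt)\<close>.\<close>
lemma exists_normalized_with_z_logderiv:
  assumes p: "p holomorphic_on S" and S: "convex S" "open S" "0 \<in> S" and p0: "p 0 = 1"
  obtains f where "f holomorphic_on S" "f 0 = 0" "deriv f 0 = 1" "\<And>z. z \<noteq> 0 \<Longrightarrow> f z \<noteq> 0"
    and "\<And>z. z \<in> S \<Longrightarrow> z * deriv f z = p z * f z"
proof -
  define h where "h = (\<lambda>z. if z = 0 then deriv p 0 else (p z - p 0) / (z - 0))"
  have h: "h holomorphic_on S"
    unfolding h_def using p S(2) by (rule pole_lemma_open)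
  have zh: "1 + z * h z = p z" for z
    by (simp add: h_def p0)
  obtain g0 where g0: "\<And>z. z \<in> S \<Longrightarrow> (g0 has_field_derivative h z) (at z within S)"
    using holomorphic_convex_primitive'[OF S(1,2) h] by blast
  define g where "g = (\<lambda>z. g0 z - g0 0)"
  have g: "(g has_field_derivative h z) (at z)" if "z \<in> S" for z
    using g0[OF that] at_within_open[OF that S(2)] unfolding g_def
    by (auto intro!: derivative_eq_intros)
  define f where "f = (\<lambda>z. z * exp (g z))"
  have df: "(f has_field_derivative p z * exp (g z)) (at z)" if "z \<in> S" for z
  proof -
    have "(f has_field_derivative (1 + z * h z) * exp (g z)) (at z)"
      unfolding f_def using g[OF that] by (auto intro!: derivative_eq_intros simp: algebra_simps)
    then show ?thesis by (simp only: zh)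
  qed
  have "f holomorphic_on S"
    using df S(2) by (auto simp: holomorphic_on_open)
  moreover have "f 0 = 0"
    by (simp add: f_def)
  moreover have "deriv f 0 = 1"
    using DERIV_imp_deriv[OF df[OF S(3)]] by (simp add: p0 g_def)
  moreover have "f z \<noteq> 0" if "z \<noteq> 0" for z
    using that by (simp add: f_def)
  moreover have "z * deriv f z = p z * f z" if "z \<in> S" for z
    using DERIV_imp_deriv[OF df[OF that]] by (simp add: f_def)
  ultimately show thesis
    by (rule that)
qed

lemma S_nc_extremal: "\<exists>f\<in>S_nc. taylor_coeff f 2 = 1"
proof -
  define F where "F = (\<lambda>z::complex. (1 + z) / cos z)"
  have F: "F holomorphic_on ball 0 1" "F 0 = 1" "deriv F 0 = 1"
    using holomorphic_on_one_plus_div_cos DERIV_imp_deriv[OF one_plus_div_cos_has_derivative_0]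
    by (auto simp: F_def)
  obtain f where f: "f holomorphic_on ball 0 1" "f 0 = 0" "deriv f 0 = 1" "\<And>z. z \<noteq> 0 \<Longrightarrow> f z \<noteq> 0"
    and eq: "\<And>z. z \<in> ball 0 1 \<Longrightarrow> z * deriv f z = F z * f z"
    using exists_normalized_with_z_logderiv[OF F(1) convex_ball open_ball _ F(2)] by auto
  have "subordinate (\<lambda>z. if z = 0 then 1 else z * deriv f z / f z) F"
    unfolding subordinate_def using f eq F(2) by (intro exI[of _ "\<lambda>z. z"]) auto
  then have "f \<in> S_nc"
    using f by (simp add: S_nc_def classA_def F_def)
  moreover have "(deriv ^^ 2) f 0 = 2 * deriv F 0"
    using f F eq by (intro higher_deriv_2_eq_if_mult_eq_z_deriv) auto
  ultimately show ?thesis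
    using F by (auto simp: taylor_coeff_def)
qed

lemma identity_in_S_nc: "(\<lambda>z. z) \<in> S_nc"
proof -
  have "subordinate (\<lambda>z. if z = 0 then 1 else z * deriv (\<lambda>z. z) z / z) (\<lambda>z. (1 + z) / cos z)"
    unfolding subordinate_def by (intro exI[of _ "\<lambda>z. 0"]) auto
  then show ?thesis by (simp add: S_nc_def classA_def)
qed

lemma taylor_coeff_identity: "n \<noteq> 1 \<Longrightarrow> taylor_coeff (\<lambda>z. z) n = 0"
  by (simp add: taylor_coeff_def)

lemma Toeplitz3_eq:
  fixes a b :: complex
  shows "1 - 2 * (norm a)\<^sup>2 + 2 * Re (a\<^sup>2 * cnj b) - (norm b)\<^sup>2 = (1 - (norm a)\<^sup>2)\<^sup>2 - (norm (b - a\<^sup>2))\<^sup>2"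
  unfolding cmod_power2 by (simp add: power2_eq_square algebra_simps)

lemma Toeplitz3_le_1:
  fixes a b :: complex
  assumes "(norm a)\<^sup>2 \<le> 2"
  shows "1 - 2 * (norm a)\<^sup>2 + 2 * Re (a\<^sup>2 * cnj b) - (norm b)\<^sup>2 \<le> 1"
proof -
  have "0 \<le> (norm a)\<^sup>2 * (2 - (norm a)\<^sup>2)"
    using assms by simp
  then have "(1 - (norm a)\<^sup>2)\<^sup>2 \<le> 1"
    by (simp add: power2_eq_square algebra_simps)
  then show ?thesis
    unfolding Toeplitz3_eq using zero_le_power2[of "norm (b - a\<^sup>2)"] by linarith
qed

theorem mainTheorem6:
  shows "(\<forall>f\<in>S_nc. 0 \<le> detT21 f \<and> detT21 f \<le> 1 \<and> detT31 f \<le> 1) \<and>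
         (\<exists>f\<in>S_nc. detT21 f = 0) \<and> (\<exists>f\<in>S_nc. detT21 f = 1) \<and> (\<exists>f\<in>S_nc. detT31 f = 1)"
proof (intro conjI ballI)
  fix f assume "f \<in> S_nc"
  then have a2: "(norm (taylor_coeff f 2))\<^sup>2 \<le> 1"
    using norm_taylor_coeff_2_le_1_if_S_nc by (simp add: power_le_one)
  then show "0 \<le> detT21 f" "detT21 f \<le> 1"
    by (simp_all add: detT21_def)
  show "detT31 f \<le> 1"
    unfolding detT31_def using a2 by (intro Toeplitz3_le_1) simp
next
  obtain f where "f \<in> S_nc" "taylor_coeff f 2 = 1"
    using S_nc_extremal by blast
  then show "\<exists>f\<in>S_nc. detT21 f = 0"
    by (intro bexI[of _ f]) (simp_all add: detT21_def)
  show "\<exists>f\<in>S_nc. detT21 f = 1" "\<exists>f\<in>S_nc. detT31 f = 1"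
    using identity_in_S_nc
    by (intro bexI[of _ "\<lambda>z. z"]; simp add: detT21_def detT31_def taylor_coeff_identity)+
qed

end
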